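(* Every pair of different words $x,y$ over a finite alphabet can be separated exactly by a 2-state AfA.
   Context: An $n$-state affine finite automaton (AfA) over a finite alphabet $\Sigma$ consists of real $n\times n$ matrices $A_\sigma$ for $\sigma\in\Sigma\cup\{\$\}$ ($\$$ a right end-marker), each of whose columns sums to $1$; an initial vector $v_0\in\mathbb{R}^n$ with entries summing to $1$; and a set $E_a$ of accepting states. On input $w=w_1\cdots w_k$ the final vector is $v_f=A_\$A_{w_k}\cdots A_{w_1}v_0$, and $w$ is accepted with probability $\sum_{j\in E_a}|v_f[j]|\big/\sum_{j=1}^n|v_f[j]|$. A pair is separated exactly if one word is accepted with probability $1$ and the other with probability $0$. *)

theory Defs
  imports "HOL-Analysis.Analysis"
begin

definition affine_matrix :: "real^'n::finite^'n \<Rightarrow> bool" where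
  "affine_matrix M \<longleftrightarrow> (\<forall>j. (\<Sum>i\<in>UNIV. M $ i $ j) = 1)"

definition affine_vector :: "real^'n::finite \<Rightarrow> bool" where
  "affine_vector v \<longleftrightarrow> (\<Sum>i\<in>UNIV. v $ i) = 1"

definition is_AfA :: "'a set \<Rightarrow> ('a \<Rightarrow> real^'n::finite^'n) \<Rightarrow> real^'n^'n \<Rightarrow> real^'n \<Rightarrow> bool" where
  "is_AfA Sig A Aend v0 \<longleftrightarrow>
     (\<forall>\<sigma>\<in>Sig. affine_matrix (A \<sigma>)) \<and> affine_matrix Aend \<and> affine_vector v0"

definition final_vec :: "('a \<Rightarrow> real^'n::finite^'n) \<Rightarrow> real^'n^'n \<Rightarrow> real^'n \<Rightarrow> 'a list \<Rightarrow> real^'n" where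
  "final_vec A Aend v0 w = Aend *v (foldl (\<lambda>v \<sigma>. A \<sigma> *v v) v0 w)"

definition accept_prob :: "('a \<Rightarrow> real^'n::finite^'n) \<Rightarrow> real^'n^'n \<Rightarrow> real^'n \<Rightarrow> 'n set \<Rightarrow> 'a list \<Rightarrow> real" where
  "accept_prob A Aend v0 E w =
     (let vf = final_vec A Aend v0 w in
       (\<Sum>j\<in>E. \<bar>vf $ j\<bar>) / (\<Sum>j\<in>UNIV. \<bar>vf $ j\<bar>))"

definition separates_exactly :: "('a \<Rightarrow> real^'n::finite^'n) \<Rightarrow> real^'n^'n \<Rightarrow> real^'n \<Rightarrow> 'n set \<Rightarrow> 'a list \<Rightarrow> 'a list \<Rightarrow> bool" where
  "separates_exactly A Aend v0 E x y \<longleftrightarrow>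
     (accept_prob A Aend v0 E x = 1 \<and> accept_prob A Aend v0 E y = 0) \<or>
     (accept_prob A Aend v0 E x = 0 \<and> accept_prob A Aend v0 E y = 1)"

end

theory Submission
  imports Defs
begin

text \<open>A 2-state AfA whose vectors stay on the line of points \<open>(t, 1 - t)\<close> is really a
  one-dimensional affine machine \<open>t \<mapsto> a t + b\<close>. Reading letters as nonzero digits
  \<open>t \<mapsto> B t + d \<sigma>\<close> turns a word into its base-\<open>B\<close> value, which is injective on words. For
  \<open>x \<noteq> y\<close> the end-marker then applies the affine map sending the value of \<open>x\<close> to 1 and
  that of \<open>y\<close> to 0, so the final vectors are \<open>(1, 0)\<close> and \<open>(0, 1)\<close> and the first state
  accepts \<open>x\<close> with probability 1 and \<open>y\<close> with probability 0.\<close>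

definition line_point :: "real \<Rightarrow> real^2" where
  "line_point t = vector [t, 1 - t]"

definition aff_map :: "real \<Rightarrow> real \<Rightarrow> real^2^2" where
  "aff_map a b = vector [vector [a + b, b], vector [1 - a - b, 1 - b]]"

lemma affine_vector_line_point: "affine_vector (line_point t)"
  by (simp add: affine_vector_def line_point_def sum_2)

lemma affine_matrix_aff_map: "affine_matrix (aff_map a b)"
  by (auto simp: affine_matrix_def aff_map_def sum_2 forall_2)

lemma aff_map_line_point: "aff_map a b *v line_point t = line_point (a * t + b)"
  by (auto simp: aff_map_def line_point_def vec_eq_iff forall_2 matrix_vector_mult_def
      sum_2 algebra_simps)

lemma foldl_aff_map_line_point:
  "foldl (\<lambda>v \<sigma>. aff_map (a \<sigma>) (b \<sigma>) *v v) (line_point t) w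
     = line_point (foldl (\<lambda>t \<sigma>. a \<sigma> * t + b \<sigma>) t w)"
  by (induction w arbitrary: t) (simp_all add: aff_map_line_point)

lemma accept_prob_line_point:
  assumes "final_vec A Aend v0 w = line_point t"
  shows "accept_prob A Aend v0 {1} w = \<bar>t\<bar> / (\<bar>t\<bar> + \<bar>1 - t\<bar>)"
  by (simp add: accept_prob_def assms line_point_def sum_2)

definition base_value :: "('a \<Rightarrow> nat) \<Rightarrow> nat \<Rightarrow> 'a list \<Rightarrow> nat" where
  "base_value d B w = foldl (\<lambda>n \<sigma>. n * B + d \<sigma>) 0 w"

lemma base_value_Nil [simp]: "base_value d B [] = 0"
  by (simp add: base_value_def)

lemma base_value_snoc [simp]: "base_value d B (w @ [\<sigma>]) = base_value d B w * B + d \<sigma>"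
  by (simp add: base_value_def)

lemma of_nat_foldl_digits:
  "foldl (\<lambda>t \<sigma>. of_nat B * t + of_nat (d \<sigma>)) (of_nat n) w
     = (of_nat (foldl (\<lambda>n \<sigma>. n * B + d \<sigma>) n w) :: 'b::semiring_1)"
proof (induction w arbitrary: n)
  case (Cons \<sigma> w)
  show ?case
    using Cons.IH[of "n * B + d \<sigma>"] by (simp add: mult.commute)
qed simp

text \<open>Digits are nonzero so that leading digits cannot be dropped: this is what separates
  words of different lengths.\<close>
lemma inj_on_base_value:
  assumes digits: "\<And>\<sigma>. \<sigma> \<in> S \<Longrightarrow> 0 < d \<sigma> \<and> d \<sigma> < B" and "inj_on d S"
  shows "inj_on (base_value d B) (lists S)"
proof
  fix u v assume "u \<in> lists S" "v \<in> lists S" "base_value d B u = base_value d B v"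
  then show "u = v"
  proof (induction u arbitrary: v rule: rev_induct)
    case Nil
    then show ?case
      using digits by (cases v rule: rev_exhaust) fastforce+
  next
    case (snoc a u)
    show ?case
    proof (cases v rule: rev_exhaust)
      case Nil
      then show ?thesis using snoc.prems digits by fastforce
    next
      case (snoc v' b)
      have in_S: "a \<in> S" "b \<in> S" "u \<in> lists S" "v' \<in> lists S"
        using snoc.prems snoc by auto
      have eq: "base_value d B u * B + d a = base_value d B v' * B + d b"
        using snoc.prems snoc by simp
      have "d a = (base_value d B u * B + d a) mod B" using digits in_S by simp
      also have "\<dots> = d b" using eq digits in_S by simp
      finally have "d a = d b" .
      then have "a = b" using \<open>inj_on d S\<close> in_S by (auto dest: inj_onD)
      moreover have "base_value d B u = base_value d B v'"
        using eq \<open>d a = d b\<close> digits in_S by auto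
      ultimately show ?thesis using snoc.IH in_S snoc by auto
    qed
  qed
qed

lemma finite_digit_encoding:
  assumes "finite S"
  obtains d :: "'a \<Rightarrow> nat" and B where "\<And>\<sigma>. \<sigma> \<in> S \<Longrightarrow> 0 < d \<sigma> \<and> d \<sigma> < B" "inj_on d S"
proof -
  obtain f n where f: "f ` S = {i::nat. i < n}" "inj_on f S"
    using finite_imp_inj_to_nat_seg[OF assms] by auto
  have "0 < f \<sigma> + 1 \<and> f \<sigma> + 1 < n + 1" if "\<sigma> \<in> S" for \<sigma>
    using f(1) that by auto
  moreover have "inj_on (\<lambda>\<sigma>. f \<sigma> + 1) S"
    using f(2) by (auto simp: inj_on_def)
  ultimately show thesis by (rule that)
qed

lemma base_value_automaton_separates:
  fixes d :: "'a \<Rightarrow> nat" and B :: nat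
  defines "A \<equiv> \<lambda>\<sigma>. aff_map (real B) (real (d \<sigma>))"
  assumes "base_value d B x \<noteq> base_value d B y"
  shows "\<exists>Aend v0 E. is_AfA Sig A Aend v0 \<and> separates_exactly A Aend v0 E x y"
proof -
  define vx vy where "vx = real (base_value d B x)" and "vy = real (base_value d B y)"
  have "vx \<noteq> vy" using assms(2) by (simp add: vx_def vy_def)
  define Aend where "Aend = aff_map (1 / (vx - vy)) (- vy / (vx - vy))"
  define v0 where "v0 = line_point 0"
  have final: "final_vec A Aend v0 w
      = line_point ((real (base_value d B w) - vy) / (vx - vy))" for w
  proof -
    have "foldl (\<lambda>v \<sigma>. A \<sigma> *v v) v0 w = line_point (real (base_value d B w))"
      using of_nat_foldl_digits[of B d 0 w, where 'b = real]
      by (simp add: A_def v0_def foldl_aff_map_line_point base_value_def)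
    then show ?thesis
      by (simp add: final_vec_def Aend_def aff_map_line_point diff_divide_distrib)
  qed
  have "accept_prob A Aend v0 {1} x = 1"
    using accept_prob_line_point[OF final, of x] \<open>vx \<noteq> vy\<close> by (simp flip: vx_def)
  moreover have "accept_prob A Aend v0 {1} y = 0"
    using accept_prob_line_point[OF final, of y] by (simp flip: vy_def)
  moreover have "is_AfA Sig A Aend v0"
    by (simp add: is_AfA_def A_def Aend_def v0_def affine_matrix_aff_map
        affine_vector_line_point)
  ultimately show ?thesis unfolding separates_exactly_def by blast
qed

theorem mainTheorem9:
  fixes Sig :: "'a set" and x y :: "'a list"
  assumes "finite Sig" and "x \<in> lists Sig" and "y \<in> lists Sig" and "x \<noteq> y"
  shows "\<exists>(A :: 'a \<Rightarrow> real^2^2) (Aend :: real^2^2) (v0 :: real^2) (E :: 2 set).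
           is_AfA Sig A Aend v0 \<and> separates_exactly A Aend v0 E x y"
proof -
  obtain d :: "'a \<Rightarrow> nat" and B where digits: "\<And>\<sigma>. \<sigma> \<in> Sig \<Longrightarrow> 0 < d \<sigma> \<and> d \<sigma> < B" and "inj_on d Sig"
    using finite_digit_encoding[OF \<open>finite Sig\<close>] by metis
  have "base_value d B x \<noteq> base_value d B y"
    using inj_onD[OF inj_on_base_value[OF digits \<open>inj_on d Sig\<close>] _ assms(2,3)] assms(4)
    by blast
  from base_value_automaton_separates[OF this, of Sig] show ?thesis
    by blast
qed

end
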